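(* Let $N$ be a Poisson process on $[0,\infty)$ with intensity $\lambda>0$, with points $0<X_1<X_2<\cdots$, and let $\epsilon>0$. For every integer $n\ge0$ and every $s\ge0$, $$\mathbb{E}\left[e^{-sU_n}\right]=\frac{\lambda^n}{\left(\lambda+s\,e^{(\lambda+s)\epsilon}\right)^n}.$$
   Context: A cluster is a maximal set of consecutive points $X_j,\dots,X_k$ with $X_{l+1}-X_l\le\epsilon$ for $j\le l<k$. Clusters are numbered from left to right; $A_i$ is the first point of the $i$-th cluster. $\Delta A_i=A_{i+1}-A_i$, and $U_n=\sum_{k=1}^n\Delta A_k=A_{n+1}-A_1$ (so $U_0=0$). *)

theory Defs
  imports "HOL-Probability.Probability"
begin

text \<open>Poisson process on [0,oo) with intensity l, given by i.i.d. Exp(l) inter-arrival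
  times E 0, E 1, ...; the points are X k = E 0 + ... + E (k-1) for k >= 1.\<close>

definition poisson_interarrivals ::
  "'a measure \<Rightarrow> real \<Rightarrow> (nat \<Rightarrow> 'a \<Rightarrow> real) \<Rightarrow> bool" where
  "poisson_interarrivals M l E \<longleftrightarrow>
     prob_space.indep_vars M (\<lambda>_. borel) E UNIV \<and>
     (\<forall>i. distributed M lborel (E i) (exponential_density l))"

definition pp_points :: "(nat \<Rightarrow> 'a \<Rightarrow> real) \<Rightarrow> 'a \<Rightarrow> nat \<Rightarrow> real" where
  "pp_points E \<omega> k = (\<Sum>i<k. E i \<omega>)"

definition cluster_starts :: "(nat \<Rightarrow> real) \<Rightarrow> real \<Rightarrow> nat set" where
  "cluster_starts X \<epsilon> = {k. k = 1 \<or> (k \<ge> 2 \<and> X k - X (k - 1) > \<epsilon>)}"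

definition cluster_first :: "(nat \<Rightarrow> real) \<Rightarrow> real \<Rightarrow> nat \<Rightarrow> real" where
  "cluster_first X \<epsilon> i = X (enumerate (cluster_starts X \<epsilon>) (i - 1))"

definition cluster_U :: "(nat \<Rightarrow> real) \<Rightarrow> real \<Rightarrow> nat \<Rightarrow> real" where
  "cluster_U X \<epsilon> n = cluster_first X \<epsilon> (n + 1) - cluster_first X \<epsilon> 1"

end

theory Submission
  imports Defs
begin

text \<open>
  With \<open>X k = E 0 + \<dots> + E (k - 1)\<close>, a new cluster starts at \<open>X k\<close> (\<open>k \<ge> 2\<close>) exactly when
  the gap \<open>E (k - 1)\<close> exceeds \<open>\<epsilon>\<close>. Hence if \<open>E (j + 1)\<close> is the \<open>n\<close>-th long gap among
  \<open>E 1, E 2, \<dots>\<close>, then \<open>U n = E 1 + \<dots> + E (j + 1)\<close>, and almost surely \<open>exp (- s U n)\<close> is the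
  sum over \<open>j\<close> of \<open>exp (- s (E 1 + \<dots> + E j))\<close> on the event that exactly \<open>n - 1\<close> of
  \<open>E 1, \<dots>, E j\<close> are long, times \<open>exp (- s E (j + 1))\<close> on the event \<open>E (j + 1) > \<epsilon>\<close>.
  By independence the \<open>j\<close>-th term has expectation \<open>b (j choose n - 1) a ^ (j - n + 1) b ^ (n - 1)\<close>,
  where \<open>a\<close> and \<open>b\<close> are the expectations of \<open>exp (- s E)\<close> on \<open>E \<le> \<epsilon>\<close> and on \<open>E > \<epsilon>\<close>.
  Summing this negative binomial series gives \<open>(b / (1 - a)) ^ n\<close>, and
  \<open>b / (1 - a) = l / (l + s exp ((l + s) \<epsilon>))\<close>. For \<open>s = 0\<close> the same computation shows that
  the \<open>n\<close>-th long gap exists almost surely.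
\<close>

lemma card_Int_lessThan_remove:
  fixes S :: "nat set"
  assumes "L \<in> S" and "L < m"
  shows "card (S \<inter> {..<m}) = Suc (card ((S - {L}) \<inter> {..<m}))"
proof -
  have "(S - {L}) \<inter> {..<m} = (S \<inter> {..<m}) - {L}" by auto
  moreover have "card (S \<inter> {..<m}) > 0" using assms by (auto simp: card_gt_0_iff)
  ultimately show ?thesis using assms by (simp add: card_Diff_singleton)
qed

lemma enumerate_eqI:
  fixes S :: "nat set"
  assumes "m \<in> S" and "card (S \<inter> {..<m}) = n"
  shows "enumerate S n = m"
  using assms
proof (induction n arbitrary: S)
  case 0
  then have "\<forall>y\<in>S. m \<le> y" by auto
  then show ?case using 0 by (auto simp: enumerate_0 intro!: Least_equality)
next
  case (Suc n)
  define L where "L = (LEAST x. x \<in> S)"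
  from Suc.prems obtain y where y: "y \<in> S" "y < m"
    by (metis card.empty disjoint_iff lessThan_iff nat.distinct(1))
  then have L: "L \<in> S" "L < m"
    unfolding L_def by (auto intro: LeastI order.strict_trans1[OF Least_le])
  then have "card ((S - {L}) \<inter> {..<m}) = n"
    using Suc.prems card_Int_lessThan_remove[of L S m] by simp
  then have "enumerate (S - {L}) n = m"
    using Suc.IH Suc.prems L by simp
  then show ?case by (simp add: L_def enumerate_Suc)
qed

lemma enumerate_eq_Least_empty:
  fixes S :: "nat set"
  assumes "\<forall>m\<in>S. card (S \<inter> {..<m}) \<noteq> n"
  shows "enumerate S n = (LEAST x. x \<in> ({} :: nat set))"
  using assms
proof (induction n arbitrary: S)
  case 0
  have "S = {}"
  proof (rule ccontr)
    assume "S \<noteq> {}"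
    then have "(LEAST x. x \<in> S) \<in> S" by (auto intro: LeastI)
    moreover have "S \<inter> {..<(LEAST x. x \<in> S)} = {}" using not_less_Least by auto
    ultimately show False using 0 by force
  qed
  then show ?case by (simp add: enumerate_0)
next
  case (Suc n)
  show ?case
  proof (cases "S = {}")
    case True
    then show ?thesis using Suc.IH[of "{}"] by (simp add: enumerate_Suc)
  next
    case False
    define L where "L = (LEAST x. x \<in> S)"
    have L: "L \<in> S" using False unfolding L_def by (auto intro: LeastI)
    have "card ((S - {L}) \<inter> {..<m}) \<noteq> n" if m: "m \<in> S - {L}" for m
    proof -
      have "L < m" using m unfolding L_def by (auto intro: order.not_eq_order_implies_strict Least_le)
      then show ?thesis using Suc.prems m L card_Int_lessThan_remove[of L S m] by auto
    qed
    then have "enumerate (S - {L}) n = (LEAST x. x \<in> ({} :: nat set))"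
      using Suc.IH by blast
    then show ?thesis by (simp add: L_def enumerate_Suc)
  qed
qed

definition long_gaps :: "(nat \<Rightarrow> real) \<Rightarrow> real \<Rightarrow> nat \<Rightarrow> nat set" where
  "long_gaps x \<epsilon> j = {i \<in> {1..j}. \<epsilon> < x i}"

lemma finite_long_gaps [simp]: "finite (long_gaps x \<epsilon> j)"
  by (simp add: long_gaps_def)

lemma long_gaps_0 [simp]: "long_gaps x \<epsilon> 0 = {}"
  by (simp add: long_gaps_def)

lemma long_gaps_Suc:
  "long_gaps x \<epsilon> (Suc j) = (if \<epsilon> < x (Suc j) then insert (Suc j) (long_gaps x \<epsilon> j) else long_gaps x \<epsilon> j)"
  by (auto simp: long_gaps_def le_Suc_eq)

lemma card_long_gaps_less:
  assumes "j < j'" and "\<epsilon> < x (Suc j)"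
  shows "card (long_gaps x \<epsilon> j) < card (long_gaps x \<epsilon> j')"
proof -
  have "insert (Suc j) (long_gaps x \<epsilon> j) \<subseteq> long_gaps x \<epsilon> j'"
    using assms by (auto simp: long_gaps_def)
  moreover have "Suc j \<notin> long_gaps x \<epsilon> j" by (simp add: long_gaps_def)
  ultimately show ?thesis
    by (metis card_insert_disjoint card_mono finite_long_gaps Suc_le_lessD)
qed

lemma long_gap_index_unique:
  assumes "card (long_gaps x \<epsilon> j) = r" "\<epsilon> < x (Suc j)"
    and "card (long_gaps x \<epsilon> j') = r" "\<epsilon> < x (Suc j')"
  shows "j = j'"
  using card_long_gaps_less[of j j' \<epsilon> x] card_long_gaps_less[of j' j \<epsilon> x] assms
  by (cases j j' rule: linorder_cases) simp_all

lemma cluster_starts_partial_sums: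
  "cluster_starts (\<lambda>k. \<Sum>i<k. x i) \<epsilon> = {k. k = 1 \<or> (2 \<le> k \<and> \<epsilon> < x (k - 1))}"
proof -
  have "(\<Sum>i<k. x i) - (\<Sum>i<k - 1. x i) = x (k - 1)" if "2 \<le> k" for k
    using that by (cases k) auto
  then show ?thesis unfolding cluster_starts_def by auto
qed

lemma card_cluster_starts_partial_sums:
  "card (cluster_starts (\<lambda>k. \<Sum>i<k. x i) \<epsilon> \<inter> {..<Suc (Suc j)}) = Suc (card (long_gaps x \<epsilon> j))"
proof -
  have eq: "cluster_starts (\<lambda>k. \<Sum>i<k. x i) \<epsilon> \<inter> {..<Suc (Suc j)} = insert 1 (Suc ` long_gaps x \<epsilon> j)"
    unfolding cluster_starts_partial_sums long_gaps_def
    by (auto intro!: image_eqI[of _ _ "_ - 1"])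
  show ?thesis
    unfolding eq by (subst card_insert_disjoint) (auto simp: card_image long_gaps_def)
qed

lemma enumerate_cluster_starts_partial_sums_0:
  "enumerate (cluster_starts (\<lambda>k. \<Sum>i<k. x i) \<epsilon>) 0 = 1"
  by (rule enumerate_eqI) (auto simp: cluster_starts_partial_sums)

lemma cluster_U_partial_sums:
  assumes "card (long_gaps x \<epsilon> j) = r" and "\<epsilon> < x (Suc j)"
  shows "cluster_U (\<lambda>k. \<Sum>i<k. x i) \<epsilon> (Suc r) = (\<Sum>i\<in>{1..Suc j}. x i)"
proof -
  have "enumerate (cluster_starts (\<lambda>k. \<Sum>i<k. x i) \<epsilon>) (Suc r) = Suc (Suc j)"
  proof (rule enumerate_eqI)
    show "Suc (Suc j) \<in> cluster_starts (\<lambda>k. \<Sum>i<k. x i) \<epsilon>"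
      using assms(2) by (simp add: cluster_starts_partial_sums)
    show "card (cluster_starts (\<lambda>k. \<Sum>i<k. x i) \<epsilon> \<inter> {..<Suc (Suc j)}) = Suc r"
      using assms(1) by (simp only: card_cluster_starts_partial_sums)
  qed
  moreover have "{..<Suc (Suc j)} = insert 0 {1..Suc j}" by auto
  ultimately show ?thesis
    by (simp add: cluster_U_def cluster_first_def enumerate_cluster_starts_partial_sums_0)
qed

text \<open>The value of \<open>cluster_U\<close> on the null event where the cluster does not exist matters only
  because the expectation requires measurability everywhere.\<close>

lemma cluster_U_partial_sums_degenerate:
  assumes "\<nexists>j. card (long_gaps x \<epsilon> j) = r \<and> \<epsilon> < x (Suc j)"
  shows "cluster_U (\<lambda>k. \<Sum>i<k. x i) \<epsilon> (Suc r) = (\<Sum>i<(LEAST k. k \<in> ({} :: nat set)). x i) - x 0"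
proof -
  let ?S = "cluster_starts (\<lambda>k. \<Sum>i<k. x i) \<epsilon>"
  have "card (?S \<inter> {..<m}) \<noteq> Suc r" if "m \<in> ?S" for m
  proof (cases "m = 1")
    case True
    then have "?S \<inter> {..<m} = {}" by (auto simp: cluster_starts_partial_sums)
    then show ?thesis by simp
  next
    case False
    with that obtain j where "m = Suc (Suc j)" "\<epsilon> < x (Suc j)"
      by (auto simp: cluster_starts_partial_sums dest!: le_Suc_ex)
    then show ?thesis using assms by (auto simp: card_cluster_starts_partial_sums)
  qed
  then show ?thesis
    by (simp add: cluster_U_def cluster_first_def enumerate_cluster_starts_partial_sums_0
        enumerate_eq_Least_empty)
qed

definition short_gap_factor :: "real \<Rightarrow> real \<Rightarrow> real \<Rightarrow> real" where
  "short_gap_factor \<epsilon> s y = (if \<epsilon> < y then 0 else exp (- s * y))"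

definition long_gap_factor :: "real \<Rightarrow> real \<Rightarrow> real \<Rightarrow> real" where
  "long_gap_factor \<epsilon> s y = (if \<epsilon> < y then exp (- s * y) else 0)"

lemma short_gap_factor_nonneg: "0 \<le> short_gap_factor \<epsilon> s y"
  and long_gap_factor_nonneg: "0 \<le> long_gap_factor \<epsilon> s y"
  by (simp_all add: short_gap_factor_def long_gap_factor_def)

lemma borel_measurable_short_gap_factor [measurable]: "short_gap_factor \<epsilon> s \<in> borel_measurable borel"
  unfolding short_gap_factor_def by measurable

lemma borel_measurable_long_gap_factor [measurable]: "long_gap_factor \<epsilon> s \<in> borel_measurable borel"
  unfolding long_gap_factor_def by measurable

lemma ennreal_exponential_density_mult_exp:
  assumes "0 \<le> l" "0 \<le> y"
  shows "ennreal (exponential_density l y) * ennreal (exp (- s * y)) = ennreal (l * exp (- (l + s) * y))"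
proof -
  have "exponential_density l y * exp (- s * y) = l * exp (- (l + s) * y)"
    using assms by (simp add: exponential_density_def mult.assoc flip: exp_add) (simp add: algebra_simps)
  then show ?thesis
    using assms by (simp add: exponential_density_def flip: ennreal_mult)
qed

lemma nn_integral_exponential_long_gap_factor:
  assumes "0 < l" "0 \<le> s" "0 \<le> \<epsilon>"
  shows "(\<integral>\<^sup>+y. ennreal (exponential_density l y) * ennreal (long_gap_factor \<epsilon> s y) \<partial>lborel)
       = ennreal (l / (l + s) * exp (- (l + s) * \<epsilon>))"
proof -
  have "(\<integral>\<^sup>+y. ennreal (exponential_density l y) * ennreal (long_gap_factor \<epsilon> s y) \<partial>lborel)
      = (\<integral>\<^sup>+y. ennreal (l * exp (- (l + s) * y)) * indicator {\<epsilon>..} y \<partial>lborel)"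
  proof (rule nn_integral_cong_AE)
    show "AE y in lborel. ennreal (exponential_density l y) * ennreal (long_gap_factor \<epsilon> s y)
        = ennreal (l * exp (- (l + s) * y)) * indicator {\<epsilon>..} y"
      using AE_lborel_singleton[of \<epsilon>] by eventually_elim
        (use assms ennreal_exponential_density_mult_exp[of l y s for y] in \<open>auto simp: long_gap_factor_def\<close>)
  qed
  also have "\<dots> = ennreal (l * (exp (- (l + s) * \<epsilon>) / (l + s)))"
    using assms by (intro nn_integral_has_integral_lebesgue' has_integral_mult_right
        has_integral_exp_minus_to_infinity) auto
  finally show ?thesis by simp
qed

lemma nn_integral_exponential_short_gap_factor:
  assumes "0 < l" "0 \<le> s" "0 \<le> \<epsilon>"
  shows "(\<integral>\<^sup>+y. ennreal (exponential_density l y) * ennreal (short_gap_factor \<epsilon> s y) \<partial>lborel)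
       = ennreal (l / (l + s) * (1 - exp (- (l + s) * \<epsilon>)))"
proof -
  define c where "c = - l / (l + s)"
  have "(\<integral>\<^sup>+y. ennreal (exponential_density l y) * ennreal (short_gap_factor \<epsilon> s y) \<partial>lborel)
      = (\<integral>\<^sup>+y. ennreal (l * exp (- (l + s) * y)) * indicator {0..\<epsilon>} y \<partial>lborel)"
    using assms ennreal_exponential_density_mult_exp[of l _ s]
    by (intro nn_integral_cong) (auto simp: short_gap_factor_def indicator_def exponential_density_def)
  also have "\<dots> = ennreal (c * exp (- (l + s) * \<epsilon>) - c * exp (- (l + s) * 0))"
  proof (intro nn_integral_has_integral_lebesgue' fundamental_theorem_of_calculus)
    have "- (l + s) * c = l"
      using assms by (simp add: c_def field_simps)
    then show "((\<lambda>y. c * exp (- (l + s) * y)) has_vector_derivative l * exp (- (l + s) * x))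
        (at x within {0..\<epsilon>})" for x
      by (auto intro!: derivative_eq_intros simp flip: has_real_derivative_iff_has_vector_derivative)
  qed (use assms in auto)
  finally show ?thesis by (simp add: c_def algebra_simps)
qed

definition gap_weight :: "real \<Rightarrow> real \<Rightarrow> (nat \<Rightarrow> real) \<Rightarrow> nat \<Rightarrow> nat \<Rightarrow> real" where
  "gap_weight \<epsilon> s x j r =
     (if card (long_gaps x \<epsilon> j) = r then exp (- s * (\<Sum>i\<in>{1..j}. x i)) else 0)"

lemma gap_weight_nonneg: "0 \<le> gap_weight \<epsilon> s x j r"
  by (simp add: gap_weight_def)

lemma gap_weight_0 [simp]: "gap_weight \<epsilon> s x 0 r = (if r = 0 then 1 else 0)"
  by (simp add: gap_weight_def)

lemma gap_weight_Suc:
  "gap_weight \<epsilon> s x (Suc j) r =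
     gap_weight \<epsilon> s x j r * short_gap_factor \<epsilon> s (x (Suc j)) +
     (case r of 0 \<Rightarrow> 0 | Suc r' \<Rightarrow> gap_weight \<epsilon> s x j r' * long_gap_factor \<epsilon> s (x (Suc j)))"
proof -
  have "exp (- s * (\<Sum>i\<in>{1..Suc j}. x i)) = exp (- s * (\<Sum>i\<in>{1..j}. x i)) * exp (- s * x (Suc j))"
    by (simp add: distrib_left flip: exp_add)
  moreover have "Suc j \<notin> long_gaps x \<epsilon> j"
    by (simp add: long_gaps_def)
  ultimately show ?thesis
    by (cases r) (auto simp: gap_weight_def long_gaps_Suc short_gap_factor_def long_gap_factor_def)
qed

lemma gap_weight_cong:
  "(\<And>i. i \<in> {1..j} \<Longrightarrow> x i = y i) \<Longrightarrow> gap_weight \<epsilon> s x j r = gap_weight \<epsilon> s y j r"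
  by (simp add: gap_weight_def long_gaps_def cong: conj_cong)

lemma borel_measurable_gap_weight:
  assumes "\<And>i. i \<in> {1..j} \<Longrightarrow> (\<lambda>\<omega>. Y \<omega> i) \<in> borel_measurable N"
  shows "(\<lambda>\<omega>. gap_weight \<epsilon> s (Y \<omega>) j r) \<in> borel_measurable N"
  using assms
proof (induction j arbitrary: r)
  case (Suc j)
  then have "(\<lambda>\<omega>. Y \<omega> (Suc j)) \<in> borel_measurable N" by simp
  then have "(\<lambda>\<omega>. short_gap_factor \<epsilon> s (Y \<omega> (Suc j))) \<in> borel_measurable N"
    and "(\<lambda>\<omega>. long_gap_factor \<epsilon> s (Y \<omega> (Suc j))) \<in> borel_measurable N"
    by measurable
  with Suc show ?case
    by (cases r) (simp_all add: gap_weight_Suc)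
qed simp

definition gap_series :: "real \<Rightarrow> real \<Rightarrow> (nat \<Rightarrow> real) \<Rightarrow> nat \<Rightarrow> ennreal" where
  "gap_series \<epsilon> s x r = (\<Sum>j. ennreal (gap_weight \<epsilon> s x j r * long_gap_factor \<epsilon> s (x (Suc j))))"

lemma gap_series_eq:
  assumes "card (long_gaps x \<epsilon> j) = r" and "\<epsilon> < x (Suc j)"
  shows "gap_series \<epsilon> s x r = ennreal (exp (- s * (\<Sum>i\<in>{1..Suc j}. x i)))"
proof -
  have "gap_series \<epsilon> s x r = (\<Sum>j'\<in>{j}. ennreal (gap_weight \<epsilon> s x j' r * long_gap_factor \<epsilon> s (x (Suc j'))))"
    unfolding gap_series_def
  proof (rule suminf_finite)
    show "ennreal (gap_weight \<epsilon> s x j' r * long_gap_factor \<epsilon> s (x (Suc j'))) = 0" if "j' \<notin> {j}" for j'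
      using that assms long_gap_index_unique[of x \<epsilon> j r j']
      by (auto simp: gap_weight_def long_gap_factor_def)
  qed simp
  also have "\<dots> = ennreal (exp (- s * (\<Sum>i\<in>{1..Suc j}. x i)))"
    using assms by (simp add: gap_weight_def long_gap_factor_def algebra_simps flip: exp_add)
  finally show ?thesis .
qed

lemma gap_series_eq_0:
  assumes "\<nexists>j. card (long_gaps x \<epsilon> j) = r \<and> \<epsilon> < x (Suc j)"
  shows "gap_series \<epsilon> s x r = 0"
proof -
  have "gap_weight \<epsilon> s x j r * long_gap_factor \<epsilon> s (x (Suc j)) = 0" for j
    using assms by (simp add: gap_weight_def long_gap_factor_def)
  then show ?thesis unfolding gap_series_def by (simp only: ennreal_0 suminf_zero)
qed

lemma exp_cluster_U_eq_gap_series: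
  assumes "\<exists>j. card (long_gaps x \<epsilon> j) = r \<and> \<epsilon> < x (Suc j)"
  shows "ennreal (exp (- s * cluster_U (\<lambda>k. \<Sum>i<k. x i) \<epsilon> (Suc r))) = gap_series \<epsilon> s x r"
proof -
  from assms obtain j where j: "card (long_gaps x \<epsilon> j) = r" "\<epsilon> < x (Suc j)"
    by blast
  show ?thesis
    by (simp add: cluster_U_partial_sums[OF j] gap_series_eq[OF j])
qed

lemma pp_points_eq: "pp_points E \<omega> = (\<lambda>k. \<Sum>i<k. E i \<omega>)"
  by (simp add: pp_points_def fun_eq_iff)

text \<open>\<open>pascal a b j r = (j choose r) * a ^ (j - r) * b ^ r\<close>.\<close>

fun pascal :: "real \<Rightarrow> real \<Rightarrow> nat \<Rightarrow> nat \<Rightarrow> real" where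
  "pascal a b 0 r = (if r = 0 then 1 else 0)"
| "pascal a b (Suc j) 0 = a * pascal a b j 0"
| "pascal a b (Suc j) (Suc r) = a * pascal a b j (Suc r) + b * pascal a b j r"

lemma pascal_nonneg: "0 \<le> a \<Longrightarrow> 0 \<le> b \<Longrightarrow> 0 \<le> pascal a b j r"
  by (induction a b j r rule: pascal.induct) auto

lemma pascal_0: "pascal a b j 0 = a ^ j"
  by (induction j) auto

lemma sums_pascal:
  assumes "0 \<le> a" "a < 1" "0 \<le> b"
  shows "(\<lambda>j. pascal a b j r) sums (b ^ r / (1 - a) ^ Suc r)"
proof (induction r)
  case 0
  then show ?case using geometric_sums[of a] assms by (simp add: pascal_0)
next
  case (Suc r)
  define B where "B = b ^ r / (1 - a) ^ Suc r"
  define d where "d = (\<lambda>j. pascal a b j (Suc r))"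
  have IH: "(\<lambda>j. pascal a b j r) sums B" using Suc B_def by simp
  have d_nonneg: "0 \<le> d j" for j unfolding d_def using assms by (simp add: pascal_nonneg)
  have d_Suc: "d (Suc j) = a * d j + b * pascal a b j r" for j
    by (simp add: d_def)
  have d_bounded: "(\<Sum>j<N. d j) \<le> b * B / (1 - a)" for N
  proof -
    have "(\<Sum>j<N. pascal a b j r) \<le> B"
      using sum_le_suminf[of "\<lambda>j. pascal a b j r" "{..<N}"] IH assms
      by (simp add: sums_iff pascal_nonneg)
    moreover have "(\<Sum>j<Suc N. d j) = a * (\<Sum>j<N. d j) + b * (\<Sum>j<N. pascal a b j r)"
      by (simp add: sum.lessThan_Suc_shift d_Suc sum.distrib sum_distrib_left d_def del: sum.lessThan_Suc)
    ultimately have "(\<Sum>j<Suc N. d j) \<le> a * (\<Sum>j<N. d j) + b * B"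
      using assms by (simp add: mult_left_mono)
    moreover have "(\<Sum>j<N. d j) \<le> (\<Sum>j<Suc N. d j)" using d_nonneg by simp
    ultimately have "(1 - a) * (\<Sum>j<N. d j) \<le> b * B" by (simp add: algebra_simps)
    then show ?thesis using assms by (simp add: field_simps)
  qed
  then obtain L where L: "d sums L"
    using summableI_nonneg_bounded[of d, OF d_nonneg d_bounded] by (auto simp: summable_sums)
  have "(\<lambda>j. d (Suc j)) sums L"
    using L sums_Suc_iff[of d L] by (simp add: d_def)
  moreover have "(\<lambda>j. d (Suc j)) sums (a * L + b * B)"
    unfolding d_Suc by (intro sums_add sums_mult IH L)
  ultimately have "L = a * L + b * B" by (rule sums_unique2)
  then have "L = b * B / (1 - a)"
    using assms by (simp add: field_simps)
  then have "L = b ^ Suc r / (1 - a) ^ Suc (Suc r)"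
    using assms by (simp add: B_def)
  then show ?case using L by (simp add: d_def)
qed

lemma gap_series_0:
  "gap_series \<epsilon> 0 x r = (if \<exists>j. card (long_gaps x \<epsilon> j) = r \<and> \<epsilon> < x (Suc j) then 1 else 0)"
  using gap_series_eq[of x \<epsilon> _ r 0] gap_series_eq_0[of x \<epsilon> r 0] by auto

lemma (in prob_space) nn_integral_mult_indep_var:
  fixes X Y :: "'a \<Rightarrow> real"
  assumes "indep_var borel X borel Y" and "\<And>\<omega>. 0 \<le> X \<omega>" and "\<And>\<omega>. 0 \<le> Y \<omega>"
  shows "(\<integral>\<^sup>+\<omega>. ennreal (X \<omega> * Y \<omega>) \<partial>M) = (\<integral>\<^sup>+\<omega>. X \<omega> \<partial>M) * (\<integral>\<^sup>+\<omega>. Y \<omega> \<partial>M)"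
proof -
  have "case_bool borel borel = (\<lambda>_::bool. borel :: real measure)"
    by (rule ext) (simp split: bool.split)
  then have "indep_vars (\<lambda>_. borel) (case_bool X Y) UNIV"
    using assms(1) by (simp add: indep_var_def)
  then have "indep_vars (\<lambda>_. borel) (\<lambda>i \<omega>. ennreal (case_bool X Y i \<omega>)) UNIV"
    by (rule indep_vars_compose2) simp
  from indep_vars_nn_integral[OF _ this]
  have "(\<integral>\<^sup>+\<omega>. (\<Prod>i\<in>UNIV. ennreal (case_bool X Y i \<omega>)) \<partial>M)
      = (\<Prod>i\<in>UNIV. \<integral>\<^sup>+\<omega>. ennreal (case_bool X Y i \<omega>) \<partial>M)"
    by auto
  then show ?thesis
    by (simp add: UNIV_bool mult.commute ennreal_mult assms(2,3))
qed

locale poisson_gaps = prob_space M for M :: "'a measure" +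
  fixes l \<epsilon> :: real and E :: "nat \<Rightarrow> 'a \<Rightarrow> real"
  assumes l_pos: "0 < l" and \<epsilon>_pos: "0 < \<epsilon>" and interarrivals: "poisson_interarrivals M l E"
begin

lemma indep_interarrivals: "indep_vars (\<lambda>_. borel) E UNIV"
  using interarrivals by (simp add: poisson_interarrivals_def)

lemma distributed_interarrival: "distributed M lborel (E i) (exponential_density l)"
  using interarrivals by (simp add: poisson_interarrivals_def)

lemma measurable_interarrival [measurable]: "E i \<in> borel_measurable M"
  using distributed_measurable[OF distributed_interarrival] by simp

lemma measurable_gap_weight [measurable]:
  "(\<lambda>\<omega>. gap_weight \<epsilon> s (\<lambda>i. E i \<omega>) j r) \<in> borel_measurable M"
  by (rule borel_measurable_gap_weight) simp

lemma measurable_gap_series [measurable]: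
  "(\<lambda>\<omega>. gap_series \<epsilon> s (\<lambda>i. E i \<omega>) r) \<in> borel_measurable M"
  unfolding gap_series_def by measurable

lemma pred_long_gap_exists [measurable]:
  "Measurable.pred M (\<lambda>\<omega>. \<exists>j. card (long_gaps (\<lambda>i. E i \<omega>) \<epsilon> j) = r \<and> \<epsilon> < E (Suc j) \<omega>)"
proof -
  have "Measurable.pred M (\<lambda>\<omega>. gap_series \<epsilon> 0 (\<lambda>i. E i \<omega>) r = 1)"
    by (rule pred_eq_const1[OF measurable_gap_series]) simp
  moreover have "gap_series \<epsilon> 0 (\<lambda>i. E i \<omega>) r = 1
      \<longleftrightarrow> (\<exists>j. card (long_gaps (\<lambda>i. E i \<omega>) \<epsilon> j) = r \<and> \<epsilon> < E (Suc j) \<omega>)" for \<omega>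
    by (simp add: gap_series_0)
  ultimately show ?thesis
    by simp
qed

lemma indep_var_gap_weight:
  assumes "\<phi> \<in> borel_measurable borel"
  shows "indep_var borel (\<lambda>\<omega>. gap_weight \<epsilon> s (\<lambda>i. E i \<omega>) j r) borel (\<lambda>\<omega>. \<phi> (E (Suc j) \<omega>))"
proof -
  have "indep_var (PiM {1..j} (\<lambda>_. borel)) (\<lambda>\<omega>. restrict (\<lambda>i. E i \<omega>) {1..j})
                  (PiM {Suc j} (\<lambda>_. borel)) (\<lambda>\<omega>. restrict (\<lambda>i. E i \<omega>) {Suc j})"
    by (rule indep_var_restrict[OF indep_interarrivals]) auto
  moreover have "(\<lambda>x. gap_weight \<epsilon> s x j r) \<in> borel_measurable (PiM {1..j} (\<lambda>_. borel))"
    by (rule borel_measurable_gap_weight) auto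
  moreover have "(\<lambda>x. \<phi> (x (Suc j))) \<in> borel_measurable (PiM {Suc j} (\<lambda>_. borel))"
    using assms by measurable
  ultimately have "indep_var borel (\<lambda>\<omega>. gap_weight \<epsilon> s (restrict (\<lambda>i. E i \<omega>) {1..j}) j r)
      borel (\<lambda>\<omega>. \<phi> (restrict (\<lambda>i. E i \<omega>) {Suc j} (Suc j)))"
    by (rule indep_var_compose[unfolded comp_def])
  moreover have "gap_weight \<epsilon> s (restrict (\<lambda>i. E i \<omega>) {1..j}) j r = gap_weight \<epsilon> s (\<lambda>i. E i \<omega>) j r" for \<omega>
    by (rule gap_weight_cong) simp
  ultimately show ?thesis by simp
qed

lemma nn_integral_gap_weight_mult:
  assumes "\<phi> \<in> borel_measurable borel" and "\<And>y. 0 \<le> \<phi> y"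
  shows "(\<integral>\<^sup>+\<omega>. ennreal (gap_weight \<epsilon> s (\<lambda>i. E i \<omega>) j r * \<phi> (E (Suc j) \<omega>)) \<partial>M)
       = (\<integral>\<^sup>+\<omega>. gap_weight \<epsilon> s (\<lambda>i. E i \<omega>) j r \<partial>M) * (\<integral>\<^sup>+\<omega>. \<phi> (E (Suc j) \<omega>) \<partial>M)"
  using assms(2) by (intro nn_integral_mult_indep_var indep_var_gap_weight assms(1) gap_weight_nonneg)

definition short_gap_mean :: "real \<Rightarrow> real" where
  "short_gap_mean s = l / (l + s) * (1 - exp (- (l + s) * \<epsilon>))"

definition long_gap_mean :: "real \<Rightarrow> real" where
  "long_gap_mean s = l / (l + s) * exp (- (l + s) * \<epsilon>)"

lemma nn_integral_short_gap_factor: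
  assumes "0 \<le> s"
  shows "(\<integral>\<^sup>+\<omega>. short_gap_factor \<epsilon> s (E k \<omega>) \<partial>M) = ennreal (short_gap_mean s)"
proof -
  have "(\<integral>\<^sup>+\<omega>. short_gap_factor \<epsilon> s (E k \<omega>) \<partial>M)
      = (\<integral>\<^sup>+y. ennreal (exponential_density l y) * ennreal (short_gap_factor \<epsilon> s y) \<partial>lborel)"
    by (rule distributed_nn_integral[OF distributed_interarrival, symmetric])
      (simp add: short_gap_factor_def)
  also have "\<dots> = ennreal (short_gap_mean s)"
    unfolding short_gap_mean_def
    using l_pos \<epsilon>_pos assms by (intro nn_integral_exponential_short_gap_factor) auto
  finally show ?thesis .
qed

lemma nn_integral_long_gap_factor:
  assumes "0 \<le> s"
  shows "(\<integral>\<^sup>+\<omega>. long_gap_factor \<epsilon> s (E k \<omega>) \<partial>M) = ennreal (long_gap_mean s)"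
proof -
  have "(\<integral>\<^sup>+\<omega>. long_gap_factor \<epsilon> s (E k \<omega>) \<partial>M)
      = (\<integral>\<^sup>+y. ennreal (exponential_density l y) * ennreal (long_gap_factor \<epsilon> s y) \<partial>lborel)"
    by (rule distributed_nn_integral[OF distributed_interarrival, symmetric])
      (simp add: long_gap_factor_def)
  also have "\<dots> = ennreal (long_gap_mean s)"
    unfolding long_gap_mean_def
    using l_pos \<epsilon>_pos assms by (intro nn_integral_exponential_long_gap_factor) auto
  finally show ?thesis .
qed

lemma gap_mean_bounds:
  assumes "0 \<le> s"
  shows "0 \<le> short_gap_mean s" "short_gap_mean s < 1" "0 \<le> long_gap_mean s"
proof -
  have bounds: "0 \<le> c * (1 - X) \<and> c * (1 - X) < 1 \<and> 0 \<le> c * X"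
    if "0 < c" "c \<le> 1" "0 < X" "X \<le> 1" for c X :: real
    using that mult_left_le_one_le[of "1 - X" c] by auto
  have "0 < l / (l + s)" "l / (l + s) \<le> 1"
    using l_pos assms by auto
  moreover have "0 < exp (- (l + s) * \<epsilon>)" "exp (- (l + s) * \<epsilon>) \<le> 1"
    using l_pos \<epsilon>_pos assms by (auto simp: mult_nonpos_nonneg)
  ultimately show "0 \<le> short_gap_mean s" "short_gap_mean s < 1" "0 \<le> long_gap_mean s"
    unfolding short_gap_mean_def long_gap_mean_def using bounds by blast+
qed

lemma long_gap_mean_div:
  assumes "0 \<le> s"
  shows "long_gap_mean s / (1 - short_gap_mean s) = l / (l + s * exp ((l + s) * \<epsilon>))"
proof -
  have "(l / (l + s) * X) / (1 - l / (l + s) * (1 - X)) = l / (l + s * Y)"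
    if "0 < X" and "X * Y = 1" for X Y :: real
  proof -
    have pos: "0 < l + s" "0 < s + l * X"
      using l_pos assms that by (auto intro: add_nonneg_pos)
    then have "1 - l / (l + s) * (1 - X) = (s + l * X) / (l + s)"
      by (simp add: field_simps)
    then have "(l / (l + s) * X) / (1 - l / (l + s) * (1 - X)) = l * X / (s + l * X)"
      using pos by simp
    also have "s + l * X = (l + s * Y) * X"
      using that by (simp add: algebra_simps)
    also have "l * X / ((l + s * Y) * X) = l / (l + s * Y)"
      using that by simp
    finally show ?thesis .
  qed
  moreover have "exp (- (l + s) * \<epsilon>) * exp ((l + s) * \<epsilon>) = 1"
    by (simp add: algebra_simps flip: exp_add)
  ultimately show ?thesis
    unfolding short_gap_mean_def long_gap_mean_def by simp
qed

lemma nn_integral_gap_weight: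
  assumes "0 \<le> s"
  shows "(\<integral>\<^sup>+\<omega>. gap_weight \<epsilon> s (\<lambda>i. E i \<omega>) j r \<partial>M)
       = ennreal (pascal (short_gap_mean s) (long_gap_mean s) j r)"
proof (induction j arbitrary: r)
  case 0
  then show ?case by (simp add: emeasure_space_1)
next
  case (Suc j)
  let ?a = "short_gap_mean s" and ?b = "long_gap_mean s"
  have ab: "0 \<le> ?a" "0 \<le> ?b" using gap_mean_bounds[OF assms] by auto
  have factor: "(\<integral>\<^sup>+\<omega>. ennreal (gap_weight \<epsilon> s (\<lambda>i. E i \<omega>) j r' * \<phi> (E (Suc j) \<omega>)) \<partial>M)
      = ennreal (c * pascal ?a ?b j r')"
    if "\<phi> \<in> borel_measurable borel" "\<And>y. 0 \<le> \<phi> y"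
      and "(\<integral>\<^sup>+\<omega>. \<phi> (E (Suc j) \<omega>) \<partial>M) = ennreal c" "0 \<le> c" for \<phi> c r'
  proof -
    have "(\<integral>\<^sup>+\<omega>. ennreal (gap_weight \<epsilon> s (\<lambda>i. E i \<omega>) j r' * \<phi> (E (Suc j) \<omega>)) \<partial>M)
        = ennreal (pascal ?a ?b j r') * ennreal c"
      using that by (simp add: nn_integral_gap_weight_mult Suc.IH)
    then show ?thesis
      using that ab by (simp add: ennreal_mult pascal_nonneg mult.commute)
  qed
  note short = factor[OF borel_measurable_short_gap_factor short_gap_factor_nonneg
      nn_integral_short_gap_factor[OF assms] ab(1)]
  note long = factor[OF borel_measurable_long_gap_factor long_gap_factor_nonneg
      nn_integral_long_gap_factor[OF assms] ab(2)]
  show ?case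
  proof (cases r)
    case 0
    then show ?thesis using short[of 0] by (simp add: gap_weight_Suc)
  next
    case (Suc r')
    have "(\<integral>\<^sup>+\<omega>. gap_weight \<epsilon> s (\<lambda>i. E i \<omega>) (Suc j) r \<partial>M)
        = (\<integral>\<^sup>+\<omega>. ennreal (gap_weight \<epsilon> s (\<lambda>i. E i \<omega>) j r * short_gap_factor \<epsilon> s (E (Suc j) \<omega>))
            + ennreal (gap_weight \<epsilon> s (\<lambda>i. E i \<omega>) j r' * long_gap_factor \<epsilon> s (E (Suc j) \<omega>)) \<partial>M)"
      by (intro nn_integral_cong) (simp add: Suc gap_weight_Suc gap_weight_nonneg
          short_gap_factor_nonneg long_gap_factor_nonneg)
    also have "\<dots> = ennreal (?a * pascal ?a ?b j r) + ennreal (?b * pascal ?a ?b j r')"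
      by (subst nn_integral_add) (auto simp: short long)
    also have "\<dots> = ennreal (pascal ?a ?b (Suc j) r)"
      using ab by (simp add: Suc pascal_nonneg)
    finally show ?thesis .
  qed
qed

lemma nn_integral_gap_series:
  assumes "0 \<le> s"
  shows "(\<integral>\<^sup>+\<omega>. gap_series \<epsilon> s (\<lambda>i. E i \<omega>) r \<partial>M)
       = ennreal ((l / (l + s * exp ((l + s) * \<epsilon>))) ^ Suc r)"
proof -
  let ?a = "short_gap_mean s" and ?b = "long_gap_mean s"
  have ab: "0 \<le> ?a" "?a < 1" "0 \<le> ?b" using gap_mean_bounds[OF assms] by auto
  have "(\<integral>\<^sup>+\<omega>. gap_series \<epsilon> s (\<lambda>i. E i \<omega>) r \<partial>M)
      = (\<Sum>j. \<integral>\<^sup>+\<omega>. ennreal (gap_weight \<epsilon> s (\<lambda>i. E i \<omega>) j r * long_gap_factor \<epsilon> s (E (Suc j) \<omega>)) \<partial>M)"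
    unfolding gap_series_def by (rule nn_integral_suminf) simp
  also have "\<dots> = (\<Sum>j. ennreal (pascal ?a ?b j r) * ennreal ?b)"
    by (simp add: nn_integral_gap_weight_mult long_gap_factor_nonneg nn_integral_gap_weight[OF assms]
        nn_integral_long_gap_factor[OF assms])
  also have "\<dots> = (\<Sum>j. ennreal (?b * pascal ?a ?b j r))"
    using ab by (simp add: ennreal_mult pascal_nonneg mult.commute)
  also have "\<dots> = ennreal (?b * (?b ^ r / (1 - ?a) ^ Suc r))"
    using ab by (intro suminf_ennreal_eq sums_mult sums_pascal) (auto simp: pascal_nonneg)
  also have "?b * (?b ^ r / (1 - ?a) ^ Suc r) = (?b / (1 - ?a)) ^ Suc r"
    by (simp add: power_divide)
  finally show ?thesis
    by (simp add: long_gap_mean_div[OF assms])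
qed

lemma AE_long_gap_exists:
  "AE \<omega> in M. \<exists>j. card (long_gaps (\<lambda>i. E i \<omega>) \<epsilon> j) = r \<and> \<epsilon> < E (Suc j) \<omega>"
proof -
  let ?A = "{\<omega> \<in> space M. \<exists>j. card (long_gaps (\<lambda>i. E i \<omega>) \<epsilon> j) = r \<and> \<epsilon> < E (Suc j) \<omega>}"
  have "?A \<in> sets M"
    by measurable
  then have "emeasure M ?A = (\<integral>\<^sup>+\<omega>. indicator ?A \<omega> \<partial>M)"
    by simp
  also have "\<dots> = (\<integral>\<^sup>+\<omega>. gap_series \<epsilon> 0 (\<lambda>i. E i \<omega>) r \<partial>M)"
    by (intro nn_integral_cong) (simp add: gap_series_0 indicator_def)
  also have "\<dots> = 1"
    using nn_integral_gap_series[of 0 r] l_pos by simp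
  finally have "prob ?A = 1"
    by (simp add: emeasure_eq_measure)
  then show ?thesis
    by (auto dest: AE_prob_1 elim: eventually_mono)
qed

lemma borel_measurable_exp_cluster_U:
  "(\<lambda>\<omega>. exp (- s * cluster_U (pp_points E \<omega>) \<epsilon> (Suc r))) \<in> borel_measurable M"
proof -
  have "exp (- s * cluster_U (pp_points E \<omega>) \<epsilon> (Suc r))
      = (if \<exists>j. card (long_gaps (\<lambda>i. E i \<omega>) \<epsilon> j) = r \<and> \<epsilon> < E (Suc j) \<omega>
         then enn2real (gap_series \<epsilon> s (\<lambda>i. E i \<omega>) r)
         else exp (- s * ((\<Sum>i<(LEAST k. k \<in> ({} :: nat set)). E i \<omega>) - E 0 \<omega>)))" for \<omega>
  proof (cases "\<exists>j. card (long_gaps (\<lambda>i. E i \<omega>) \<epsilon> j) = r \<and> \<epsilon> < E (Suc j) \<omega>")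
    case True
    then have "ennreal (exp (- s * cluster_U (pp_points E \<omega>) \<epsilon> (Suc r))) = gap_series \<epsilon> s (\<lambda>i. E i \<omega>) r"
      unfolding pp_points_eq by (rule exp_cluster_U_eq_gap_series)
    with True show ?thesis
      by (metis enn2real_ennreal exp_ge_zero)
  next
    case False
    then have "cluster_U (pp_points E \<omega>) \<epsilon> (Suc r) = (\<Sum>i<(LEAST k. k \<in> ({} :: nat set)). E i \<omega>) - E 0 \<omega>"
      unfolding pp_points_eq by (rule cluster_U_partial_sums_degenerate)
    with False show ?thesis
      by (subst if_not_P) simp_all
  qed
  then show ?thesis
    by simp
qed

lemma expectation_exp_cluster_U:
  assumes "0 \<le> s"
  shows "expectation (\<lambda>\<omega>. exp (- s * cluster_U (pp_points E \<omega>) \<epsilon> (Suc r)))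
       = (l / (l + s * exp ((l + s) * \<epsilon>))) ^ Suc r"
proof -
  have "expectation (\<lambda>\<omega>. exp (- s * cluster_U (pp_points E \<omega>) \<epsilon> (Suc r)))
      = enn2real (\<integral>\<^sup>+\<omega>. exp (- s * cluster_U (pp_points E \<omega>) \<epsilon> (Suc r)) \<partial>M)"
    by (rule integral_eq_nn_integral[OF borel_measurable_exp_cluster_U]) simp
  also have "(\<integral>\<^sup>+\<omega>. exp (- s * cluster_U (pp_points E \<omega>) \<epsilon> (Suc r)) \<partial>M)
      = (\<integral>\<^sup>+\<omega>. gap_series \<epsilon> s (\<lambda>i. E i \<omega>) r \<partial>M)"
  proof (rule nn_integral_cong_AE)
    show "AE \<omega> in M. ennreal (exp (- s * cluster_U (pp_points E \<omega>) \<epsilon> (Suc r)))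
        = gap_series \<epsilon> s (\<lambda>i. E i \<omega>) r"
      using AE_long_gap_exists[of r] by eventually_elim
        (unfold pp_points_eq, rule exp_cluster_U_eq_gap_series)
  qed
  finally show ?thesis
    using l_pos assms by (simp add: nn_integral_gap_series)
qed

end

theorem corollary2:
  fixes M :: "'a measure" and E :: "nat \<Rightarrow> 'a \<Rightarrow> real"
    and l \<epsilon> s :: real and n :: nat
  assumes "prob_space M"
    and "l > 0"
    and "poisson_interarrivals M l E"
    and "\<epsilon> > 0"
    and "s \<ge> 0"
  shows "prob_space.expectation M
           (\<lambda>\<omega>. exp (- s * cluster_U (pp_points E \<omega>) \<epsilon> n))
         = l ^ n / (l + s * exp ((l + s) * \<epsilon>)) ^ n"
proof -
  interpret poisson_gaps M l \<epsilon> E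
    using assms by (simp add: poisson_gaps_def poisson_gaps_axioms_def)
  show ?thesis
  proof (cases n)
    case 0
    then show ?thesis by (simp add: cluster_U_def prob_space)
  next
    case (Suc r)
    then show ?thesis
      using expectation_exp_cluster_U[OF \<open>s \<ge> 0\<close>] by (simp add: power_divide)
  qed
qed

end
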